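(* Let $V$ be a finite-dimensional real vector space and $A\subset V$ a finite set of nonzero vectors spanning $V$, no two of which are parallel. The following are equivalent: (i) $A$ is indecomposable; (ii) for every basis $B\subset A$ of $V$, the graph $G(B;A)$ is connected; (iii) for some basis $B\subset A$ of $V$, the graph $G(B;A)$ is connected.
   Context: A decomposition of $A$ is a partition $A=A_1\cup A_2$ into nonempty sets with $V_1\cap V_2=0$, where $V_j=\mathrm{span}(A_j)$; $A$ is indecomposable if it has no decomposition. For a basis $B\subset A$, let $[\cdot,\cdot]_B$ be the inner product for which $B$ is orthonormal, and let $G(B;A)$ be the finite graph with vertex set $B$ and an edge between distinct $x,y\in B$ whenever there is $z\in A\setminus B$ with $[x,z]_B\ne0$ and $[y,z]_B\ne0$. *)

theory Defs
  imports "HOL-Analysis.Analysis"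
begin

definition is_decomposition :: "'a::real_vector set \<Rightarrow> 'a set \<Rightarrow> 'a set \<Rightarrow> bool" where
  "is_decomposition A A1 A2 \<longleftrightarrow>
     A = A1 \<union> A2 \<and> A1 \<inter> A2 = {} \<and> A1 \<noteq> {} \<and> A2 \<noteq> {} \<and>
     span A1 \<inter> span A2 = {0}"

definition indecomposable :: "'a::real_vector set \<Rightarrow> bool" where
  "indecomposable A \<longleftrightarrow> \<not> (\<exists>A1 A2. is_decomposition A A1 A2)"

definition is_basis_in :: "'a::real_vector set \<Rightarrow> 'a set \<Rightarrow> bool" where
  "is_basis_in B A \<longleftrightarrow> B \<subseteq> A \<and> independent B \<and> span B = UNIV"

definition inner_B :: "'a::real_vector set \<Rightarrow> 'a \<Rightarrow> 'a \<Rightarrow> real" where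
  "inner_B B u v = (\<Sum>b\<in>B. real_vector.representation B u b * real_vector.representation B v b)"

definition G_edge :: "'a::real_vector set \<Rightarrow> 'a set \<Rightarrow> 'a \<Rightarrow> 'a \<Rightarrow> bool" where
  "G_edge B A x y \<longleftrightarrow> x \<in> B \<and> y \<in> B \<and> x \<noteq> y \<and>
     (\<exists>z\<in>A - B. inner_B B x z \<noteq> 0 \<and> inner_B B y z \<noteq> 0)"

definition G_connected :: "'a::real_vector set \<Rightarrow> 'a set \<Rightarrow> bool" where
  "G_connected B A \<longleftrightarrow>
     (\<forall>x\<in>B. \<forall>y\<in>B. (x, y) \<in> {(u, v). G_edge B A u v}\<^sup>*)"

end

theory Submission
  imports Defs
begin

text \<open>Fix a basis \<open>B \<subseteq> A\<close>. For \<open>b \<in> B\<close>, \<open>[b, z]\<^sub>B\<close> is the \<open>b\<close>-coordinate of \<open>z\<close>, so two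
  vertices of \<open>G(B;A)\<close> are adjacent iff they lie in the coordinate support of a common
  \<open>z \<in> A - B\<close>. A decomposition \<open>A = A\<^sub>1 \<union> A\<^sub>2\<close> forces \<open>span A\<^sub>i = span (B \<inter> A\<^sub>i)\<close>, so every
  element of \<open>A\<close> has its support inside \<open>B \<inter> A\<^sub>1\<close> or inside \<open>B \<inter> A\<^sub>2\<close>; conversely a
  partition of \<open>B\<close> that no support straddles yields a decomposition of \<open>A\<close>. Partitions of
  \<open>B\<close> that no support straddles are exactly the partitions without edges between the parts,
  so \<open>A\<close> is indecomposable iff \<open>G(B;A)\<close> is connected, whichever basis \<open>B \<subseteq> A\<close> is chosen.\<close>

definition coord_support :: "'a::real_vector set \<Rightarrow> 'a \<Rightarrow> 'a set" where
  "coord_support B v = {b. representation B v b \<noteq> 0}"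

definition separates_supports :: "'a::real_vector set \<Rightarrow> 'a set \<Rightarrow> 'a set \<Rightarrow> bool" where
  "separates_supports B A C \<longleftrightarrow>
     (\<forall>a\<in>A. coord_support B a \<subseteq> C \<or> coord_support B a \<subseteq> B - C)"

lemma coord_support_subset: "coord_support B v \<subseteq> B"
  by (auto simp: coord_support_def dest: representation_ne_zero)

lemma coord_support_basis_vector:
  assumes "independent B" "b \<in> B"
  shows "coord_support B b = {b}"
  by (simp add: coord_support_def representation_basis[OF assms])

lemma coord_support_subset_iff_in_span:
  assumes "independent B" "v \<in> span B" "S \<subseteq> B"
  shows "coord_support B v \<subseteq> S \<longleftrightarrow> v \<in> span S"
proof
  assume supp: "coord_support B v \<subseteq> S"
  have "v = (\<Sum>b\<in>coord_support B v. representation B v b *\<^sub>R b)"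
    using sum_nonzero_representation_eq[OF assms(1,2)] by (simp add: coord_support_def)
  also have "\<dots> \<in> span S"
    using supp by (intro span_sum span_scale span_base) auto
  finally show "v \<in> span S" .
next
  assume "v \<in> span S"
  then have "representation B v = representation S v"
    using representation_extend[OF assms(1) _ assms(3)] by blast
  then show "coord_support B v \<subseteq> S"
    using coord_support_subset[of S v] by (simp add: coord_support_def)
qed

lemma coord_support_eq_empty_iff:
  assumes "independent B" "v \<in> span B"
  shows "coord_support B v = {} \<longleftrightarrow> v = 0"
  using coord_support_subset_iff_in_span[OF assms, of "{}"] by simp

lemma inner_B_basis_vector:
  assumes "finite B" "independent B" "x \<in> B"
  shows "inner_B B x z = representation B z x"
proof -
  have "inner_B B x z = (\<Sum>b\<in>B. if b = x then representation B z b else 0)"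
    unfolding inner_B_def representation_basis[OF assms(2,3)] by (rule sum.cong) auto
  also have "\<dots> = representation B z x"
    using assms(1,3) by (simp add: sum.delta')
  finally show ?thesis .
qed

lemma G_edge_iff_common_support:
  assumes "finite B" "independent B"
  shows "G_edge B A x y \<longleftrightarrow> x \<in> B \<and> y \<in> B \<and> x \<noteq> y \<and>
           (\<exists>z\<in>A - B. x \<in> coord_support B z \<and> y \<in> coord_support B z)"
  using inner_B_basis_vector[OF assms] by (auto simp: G_edge_def coord_support_def)

lemma rtrancl_connected_iff_no_closed_subset:
  assumes "E \<subseteq> B \<times> B"
  shows "(\<forall>x\<in>B. \<forall>y\<in>B. (x, y) \<in> E\<^sup>*) \<longleftrightarrow> (\<forall>C\<subseteq>B. C \<noteq> {} \<longrightarrow> E `` C \<subseteq> C \<longrightarrow> C = B)"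
proof (intro iffI allI impI)
  fix C assume connected: "\<forall>x\<in>B. \<forall>y\<in>B. (x, y) \<in> E\<^sup>*"
    and C: "C \<subseteq> B" "C \<noteq> {}" "E `` C \<subseteq> C"
  have "y \<in> C" if "y \<in> B" for y
  proof -
    obtain x where "(x, y) \<in> E\<^sup>*" "x \<in> C"
      using connected C(1,2) \<open>y \<in> B\<close> by blast
    then show "y \<in> C"
      by (induction rule: rtrancl_induct) (use C(3) in blast)+
  qed
  then show "C = B"
    using C(1) by blast
next
  assume no_closed: "\<forall>C\<subseteq>B. C \<noteq> {} \<longrightarrow> E `` C \<subseteq> C \<longrightarrow> C = B"
  have "E\<^sup>* `` {x} = B" if "x \<in> B" for x
  proof -
    have "E\<^sup>* `` {x} \<subseteq> B"
      using that assms by (auto elim: rtranclE)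
    moreover have "E `` (E\<^sup>* `` {x}) \<subseteq> E\<^sup>* `` {x}"
      by (auto intro: rtrancl_into_rtrancl)
    ultimately show ?thesis
      using no_closed by blast
  qed
  then show "\<forall>x\<in>B. \<forall>y\<in>B. (x, y) \<in> E\<^sup>*"
    by blast
qed

lemma G_edge_closed_iff_separates_supports:
  assumes "finite B" "independent B" "C \<subseteq> B"
  shows "{(u, v). G_edge B A u v} `` C \<subseteq> C \<longleftrightarrow> separates_supports B A C"
proof
  assume closed: "{(u, v). G_edge B A u v} `` C \<subseteq> C"
  show "separates_supports B A C"
    unfolding separates_supports_def
  proof (intro ballI disjCI subsetI)
    fix a v assume a: "a \<in> A" "\<not> coord_support B a \<subseteq> B - C" and v: "v \<in> coord_support B a"
    obtain u where u: "u \<in> C" "u \<in> coord_support B a"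
      using a(2) coord_support_subset[of B a] by blast
    show "v \<in> C"
    proof (cases "v = u \<or> a \<in> B")
      case True
      then show ?thesis
        using u v coord_support_basis_vector[OF assms(2), of a] by auto
    next
      case False
      then have "G_edge B A u v"
        unfolding G_edge_iff_common_support[OF assms(1,2)]
        using u v a(1) coord_support_subset[of B a] by blast
      then show ?thesis
        using u(1) closed by blast
    qed
  qed
next
  assume "separates_supports B A C"
  then show "{(u, v). G_edge B A u v} `` C \<subseteq> C"
    unfolding separates_supports_def G_edge_iff_common_support[OF assms(1,2)] by blast
qed

lemma span_eq_span_Int_if_spans_meet_trivially:
  assumes "span A1 \<inter> span A2 = {0}" "B \<subseteq> A1 \<union> A2" "A1 \<subseteq> span B"
  shows "span A1 = span (B \<inter> A1)"
proof
  show "span A1 \<subseteq> span (B \<inter> A1)"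
  proof
    fix v assume v: "v \<in> span A1"
    have "span A1 \<subseteq> span B"
      by (intro span_minimal assms(3) subspace_span)
    moreover have "B = (B \<inter> A1) \<union> (B \<inter> A2)"
      using assms(2) by blast
    ultimately have "v \<in> span ((B \<inter> A1) \<union> (B \<inter> A2))"
      using v by auto
    then obtain u w where uw: "v = u + w" "u \<in> span (B \<inter> A1)" "w \<in> span (B \<inter> A2)"
      unfolding span_Un by blast
    have "u \<in> span A1"
      using uw(2) span_mono[of "B \<inter> A1" A1] by blast
    then have "w \<in> span A1"
      using span_diff[OF v] uw(1) by fastforce
    moreover have "w \<in> span A2"
      using uw(3) span_mono[of "B \<inter> A2" A2] by blast
    ultimately have "w = 0"
      using assms(1) by blast
    then show "v \<in> span (B \<inter> A1)"
      using uw by simp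
  qed
qed (simp add: span_mono)

lemma decomposition_of_separating_subset:
  assumes "is_basis_in B A" "C \<subseteq> B" "C \<noteq> {}" "C \<noteq> B" "separates_supports B A C"
  shows "is_decomposition A {a \<in> A. coord_support B a \<subseteq> C} {a \<in> A. \<not> coord_support B a \<subseteq> C}"
proof -
  have B: "B \<subseteq> A" "independent B" "span B = UNIV"
    using assms(1) by (auto simp: is_basis_in_def)
  let ?A1 = "{a \<in> A. coord_support B a \<subseteq> C}" and ?A2 = "{a \<in> A. \<not> coord_support B a \<subseteq> C}"
  have in_span_iff: "coord_support B v \<subseteq> S \<longleftrightarrow> v \<in> span S" if "S \<subseteq> B" for v S
    using coord_support_subset_iff_in_span[OF B(2) _ that] B(3) by blast
  have "?A1 \<subseteq> span C"
    using in_span_iff[OF assms(2)] by blast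
  then have "span ?A1 \<subseteq> span C"
    by (intro span_minimal subspace_span)
  moreover have "?A2 \<subseteq> span (B - C)"
    using assms(5) in_span_iff[of "B - C"] by (auto simp: separates_supports_def)
  then have "span ?A2 \<subseteq> span (B - C)"
    by (intro span_minimal subspace_span)
  moreover have "v = 0" if "v \<in> span C" "v \<in> span (B - C)" for v
  proof -
    have "coord_support B v = {}"
      using that in_span_iff[OF assms(2)] in_span_iff[of "B - C"] by blast
    then show ?thesis
      using coord_support_eq_empty_iff[OF B(2)] B(3) by blast
  qed
  ultimately have "span ?A1 \<inter> span ?A2 \<subseteq> {0}"
    by blast
  then have "span ?A1 \<inter> span ?A2 = {0}"
    by (auto intro: span_zero)
  moreover have "C \<subseteq> ?A1" "B - C \<subseteq> ?A2"
    using assms(2) B(1) coord_support_basis_vector[OF B(2)] by auto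
  ultimately show ?thesis
    using assms(2-4) unfolding is_decomposition_def by auto
qed

lemma separating_subset_of_decomposition:
  assumes "0 \<notin> A" "is_basis_in B A" "is_decomposition A A1 A2"
  shows "B \<inter> A1 \<noteq> {} \<and> B \<inter> A1 \<noteq> B \<and> separates_supports B A (B \<inter> A1)"
proof -
  have B: "B \<subseteq> A" "independent B" "span B = UNIV"
    using assms(2) by (auto simp: is_basis_in_def)
  have A: "A = A1 \<union> A2" "A1 \<inter> A2 = {}" "A1 \<noteq> {}" "A2 \<noteq> {}" "span A1 \<inter> span A2 = {0}"
    using assms(3) by (auto simp: is_decomposition_def)
  have span1: "span A1 = span (B \<inter> A1)"
    by (rule span_eq_span_Int_if_spans_meet_trivially) (use A B in auto)
  have span2: "span A2 = span (B \<inter> A2)"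
    by (rule span_eq_span_Int_if_spans_meet_trivially[of A2 A1]) (use A B in auto)
  have supp: "coord_support B a \<subseteq> B \<inter> Ai"
    if "a \<in> Ai" "span Ai = span (B \<inter> Ai)" for a Ai
    using that coord_support_subset_iff_in_span[OF B(2), of a "B \<inter> Ai"] B(3)
    by (auto intro: span_base)
  have supp1: "coord_support B a \<subseteq> B \<inter> A1" if "a \<in> A1" for a
    using supp[OF that span1] .
  have supp2: "coord_support B a \<subseteq> B - B \<inter> A1" if "a \<in> A2" for a
    using supp[OF that span2] A(2) by blast
  have nonempty: "coord_support B a \<noteq> {}" if "a \<in> A" for a
    using that assms(1) coord_support_eq_empty_iff[OF B(2), of a] B(3) by auto
  obtain a1 a2 where a: "a1 \<in> A1" "a2 \<in> A2"
    using A(3,4) by blast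
  have "B \<inter> A1 \<noteq> {}"
    using supp1[OF a(1)] nonempty[of a1] a(1) A(1) by auto
  moreover have "B \<inter> A1 \<noteq> B"
    using supp2[OF a(2)] nonempty[of a2] a(2) A(1) by auto
  moreover have "separates_supports B A (B \<inter> A1)"
    using supp1 supp2 A(1) by (auto simp: separates_supports_def)
  ultimately show ?thesis
    by blast
qed

lemma indecomposable_iff_G_connected:
  assumes "finite A" "0 \<notin> A" "is_basis_in B A"
  shows "indecomposable A \<longleftrightarrow> G_connected B A"
proof -
  have "finite B" "independent B"
    using assms(1,3) finite_subset by (auto simp: is_basis_in_def)
  have "{(u, v). G_edge B A u v} \<subseteq> B \<times> B"
    by (auto simp: G_edge_def)
  then have "G_connected B A \<longleftrightarrow>
      (\<forall>C\<subseteq>B. C \<noteq> {} \<longrightarrow> {(u, v). G_edge B A u v} `` C \<subseteq> C \<longrightarrow> C = B)"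
    unfolding G_connected_def by (rule rtrancl_connected_iff_no_closed_subset)
  also have "\<dots> \<longleftrightarrow> (\<forall>C\<subseteq>B. C \<noteq> {} \<longrightarrow> separates_supports B A C \<longrightarrow> C = B)"
    using G_edge_closed_iff_separates_supports[OF \<open>finite B\<close> \<open>independent B\<close>]
    by (intro all_cong1 imp_cong refl) auto
  also have "\<dots> \<longleftrightarrow> indecomposable A"
  proof
    assume no_separating: "\<forall>C\<subseteq>B. C \<noteq> {} \<longrightarrow> separates_supports B A C \<longrightarrow> C = B"
    show "indecomposable A"
      unfolding indecomposable_def
    proof
      assume "\<exists>A1 A2. is_decomposition A A1 A2"
      then obtain A1 A2 where "is_decomposition A A1 A2"
        by blast
      then show False
        using separating_subset_of_decomposition[OF assms(2,3)] no_separating by blast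
    qed
  next
    assume "indecomposable A"
    then show "\<forall>C\<subseteq>B. C \<noteq> {} \<longrightarrow> separates_supports B A C \<longrightarrow> C = B"
      using decomposition_of_separating_subset[OF assms(3)] by (auto simp: indecomposable_def)
  qed
  finally show ?thesis ..
qed

theorem mainTheorem10:
  fixes A :: "'a::euclidean_space set"
  assumes "finite A"
    and "0 \<notin> A"
    and "span A = UNIV"
    and "\<And>x y c. x \<in> A \<Longrightarrow> y \<in> A \<Longrightarrow> x \<noteq> y \<Longrightarrow> x \<noteq> c *\<^sub>R y"
  shows "(indecomposable A \<longleftrightarrow> (\<forall>B. is_basis_in B A \<longrightarrow> G_connected B A))
       \<and> ((\<forall>B. is_basis_in B A \<longrightarrow> G_connected B A) \<longleftrightarrow> (\<exists>B. is_basis_in B A \<and> G_connected B A))"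
proof -
  obtain B where "B \<subseteq> A" "independent B" "A \<subseteq> span B"
    using maximal_independent_subset by blast
  then have "is_basis_in B A"
    using assms(3) span_minimal[of A "span B"] by (auto simp: is_basis_in_def)
  then show ?thesis
    using indecomposable_iff_G_connected[OF assms(1,2)] by blast
qed

end
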